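(* Let $f$ be a homeomorphism of a compact metric space $(X,d)$ and let $\mu$ be a Borel measure on $X$ with $\mu(X)>0$. If $x\in X$ is a $\mu$-uniformly expansive point of $f$, then $x$ is a $\mu$-topologically stable point of $f$. Moreover, if $x$ is also a $\mu$-shadowable point of $f$, then $x$ is a strong $\mu$-topologically stable point of $f$.
   Context: $B(x,\epsilon)$ and $B[x,\epsilon]$ are the open and closed balls; $\mathcal{O}_g(x)=\{g^n(x):n\in\mathbb{Z}\}$; $d_{C^0}(f,g)=\sup_x d(f(x),g(x))$. For a point $x$, $\mathfrak{c}>0$ and $z\in B(x,\mathfrak{c})$, $\Gamma^{\mathfrak{c}}_f(z)=\{y\in B(x,\mathfrak{c}): d(f^n(y),f^n(z))\le\mathfrak{c}\ \forall n\in\mathbb{Z}\}$; $x$ is a $\mu$-uniformly expansive point of $f$ if there is $\mathfrak{c}>0$ with $\mu(\Gamma^{\mathfrak{c}}_f(z))=0$ for every $z\in B(x,\mathfrak{c})$. A $\delta$-pseudo orbit for $f$ is $\{x_n\}_{n\in\mathbb{Z}}$ with $d(f(x_n),x_{n+1})<\delta$ for all $n$; it is through a set $B$ if $x_0\in B$; it is $\epsilon$-traced if there is $y$ with $d(f^n(y),x_n)<\epsilon$ for all $n$. $x$ is $\mu$-shadowable if for every $\epsilon>0$ there are $\delta>0$ and a Borel set $B$ with $\mu(X\setminus B)=0$ such that every $\delta$-pseudo orbit through $B\cap B(x,\delta)$ is $\epsilon$-traced by some point of $X$. For $Z\subset X$, a set-valued map $H:Z\to 2^X$ has domain $Dom(H)=\{z:H(z)\ne\emptyset\}$;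 it is compact valued if each $H(z)$ is compact; $d(H,Id)\le\epsilon$ means $H(z)\subset B[z,\epsilon]$ for all $z$; it is upper semi-continuous if for each $z\in Dom(H)$ and open $O\supset H(z)$ there is $\gamma>0$ with $H(w)\subset O$ whenever $w\in Z$, $d(w,z)<\gamma$; $f\circ H=H\circ g$ means $f(H(z))=H(g(z))$ for all $z$. $x$ is a $\mu$-topologically stable point of $f$ if for every $\epsilon>0$ there is $\delta>0$ such that for every homeomorphism $g$ of $X$ with $d_{C^0}(f,g)\le\delta$ there is an upper semi-continuous compact valued $H:\overline{\mathcal{O}_g(x)}\to 2^X$ with measurable domain such that (i) $\mu(H(z))=0$ for each $z\in B(x,\delta/4)\cap\overline{\mathcal{O}_g(x)}$, (ii) $d(H,Id)\le\epsilon$, (iii) $f\circ H=H\circ g$. $x$ is strong $\mu$-topologically stable if moreover (for the given $\epsilon$, together with $\delta$) there is a Borel set $B$ with $\mu(X\setminus B)=0$ such that additionally (iv) $\mu(X\setminus Dom(H))\le\mu(X\setminus U)$ with $U=B\cap B(x,\delta)\cap\overline{\mathcal{O}_g(x)}$. *)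

theory Defs
  imports "HOL-Analysis.Analysis"
begin

text \<open>Homeomorphism of the whole space (the space X is the type universe).\<close>
definition is_homeo :: "('a::metric_space \<Rightarrow> 'a) \<Rightarrow> bool" where
  "is_homeo f \<longleftrightarrow> (\<exists>g. homeomorphism UNIV UNIV f g)"

definition iter :: "('a \<Rightarrow> 'a) \<Rightarrow> int \<Rightarrow> 'a \<Rightarrow> 'a" where
  "iter f n = (if 0 \<le> n then f ^^ nat n else inv f ^^ nat (- n))"

definition orbit :: "('a \<Rightarrow> 'a) \<Rightarrow> 'a \<Rightarrow> 'a set" where
  "orbit g x = {iter g n x | n. True}"

definition Gamma :: "('a::metric_space \<Rightarrow> 'a) \<Rightarrow> real \<Rightarrow> 'a \<Rightarrow> 'a \<Rightarrow> 'a set" where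
  "Gamma f c x z = {y \<in> ball x c. \<forall>n::int. dist (iter f n y) (iter f n z) \<le> c}"

definition unif_expansive_point :: "'a measure \<Rightarrow> ('a::metric_space \<Rightarrow> 'a) \<Rightarrow> 'a \<Rightarrow> bool" where
  "unif_expansive_point \<mu> f x \<longleftrightarrow>
     (\<exists>c>0. \<forall>z\<in>ball x c. emeasure \<mu> (Gamma f c x z) = 0)"

definition pseudo_orbit :: "('a::metric_space \<Rightarrow> 'a) \<Rightarrow> real \<Rightarrow> (int \<Rightarrow> 'a) \<Rightarrow> bool" where
  "pseudo_orbit f \<delta> \<xi> \<longleftrightarrow> (\<forall>n. dist (f (\<xi> n)) (\<xi> (n + 1)) < \<delta>)"

definition traced :: "('a::metric_space \<Rightarrow> 'a) \<Rightarrow> real \<Rightarrow> (int \<Rightarrow> 'a) \<Rightarrow> bool" where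
  "traced f \<epsilon> \<xi> \<longleftrightarrow> (\<exists>y. \<forall>n. dist (iter f n y) (\<xi> n) < \<epsilon>)"

definition shadowable_point :: "'a measure \<Rightarrow> ('a::metric_space \<Rightarrow> 'a) \<Rightarrow> 'a \<Rightarrow> bool" where
  "shadowable_point \<mu> f x \<longleftrightarrow>
     (\<forall>\<epsilon>>0. \<exists>\<delta>>0. \<exists>B \<in> sets \<mu>. emeasure \<mu> (UNIV - B) = 0 \<and>
        (\<forall>\<xi>. pseudo_orbit f \<delta> \<xi> \<and> \<xi> 0 \<in> B \<inter> ball x \<delta> \<longrightarrow> traced f \<epsilon> \<xi>))"

definition C0_close :: "('a::metric_space \<Rightarrow> 'a) \<Rightarrow> ('a \<Rightarrow> 'a) \<Rightarrow> real \<Rightarrow> bool" where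
  "C0_close f g \<delta> \<longleftrightarrow> (\<forall>y. dist (f y) (g y) \<le> \<delta>)"

definition dom_sv :: "'a set \<Rightarrow> ('a \<Rightarrow> 'b set) \<Rightarrow> 'a set" where
  "dom_sv Z H = {z \<in> Z. H z \<noteq> {}}"

definition usc_on :: "'a::metric_space set \<Rightarrow> ('a \<Rightarrow> 'b::topological_space set) \<Rightarrow> bool" where
  "usc_on Z H \<longleftrightarrow> (\<forall>z \<in> dom_sv Z H. \<forall>V. open V \<and> H z \<subseteq> V \<longrightarrow>
      (\<exists>\<gamma>>0. \<forall>w\<in>Z. dist w z < \<gamma> \<longrightarrow> H w \<subseteq> V))"

definition stab_map :: "'a measure \<Rightarrow> ('a::metric_space \<Rightarrow> 'a) \<Rightarrow> ('a \<Rightarrow> 'a) \<Rightarrow> 'a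
     \<Rightarrow> real \<Rightarrow> real \<Rightarrow> ('a \<Rightarrow> 'a set) \<Rightarrow> bool" where
  "stab_map \<mu> f g x \<epsilon> \<delta> H \<longleftrightarrow>
     (let Z = closure (orbit g x) in
        usc_on Z H \<and> (\<forall>z\<in>Z. compact (H z)) \<and> dom_sv Z H \<in> sets \<mu> \<and>
        (\<forall>z \<in> ball x (\<delta>/4) \<inter> Z. emeasure \<mu> (H z) = 0) \<and>
        (\<forall>z\<in>Z. H z \<subseteq> cball z \<epsilon>) \<and>
        (\<forall>z\<in>Z. f ` H z = H (g z)))"

definition top_stable_point :: "'a measure \<Rightarrow> ('a::metric_space \<Rightarrow> 'a) \<Rightarrow> 'a \<Rightarrow> bool" where
  "top_stable_point \<mu> f x \<longleftrightarrow>
     (\<forall>\<epsilon>>0. \<exists>\<delta>>0. \<forall>g. is_homeo g \<and> C0_close f g \<delta> \<longrightarrow>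
        (\<exists>H. stab_map \<mu> f g x \<epsilon> \<delta> H))"

definition strong_top_stable_point :: "'a measure \<Rightarrow> ('a::metric_space \<Rightarrow> 'a) \<Rightarrow> 'a \<Rightarrow> bool" where
  "strong_top_stable_point \<mu> f x \<longleftrightarrow>
     (\<forall>\<epsilon>>0. \<exists>\<delta>>0. \<exists>B \<in> sets \<mu>. emeasure \<mu> (UNIV - B) = 0 \<and>
       (\<forall>g. is_homeo g \<and> C0_close f g \<delta> \<longrightarrow>
        (\<exists>H. stab_map \<mu> f g x \<epsilon> \<delta> H \<and>
           emeasure \<mu> (UNIV - dom_sv (closure (orbit g x)) H)
             \<le> emeasure \<mu> (UNIV - (B \<inter> ball x \<delta> \<inter> closure (orbit g x))))))"

end

theory Submission
  imports Defs
begin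

text \<open>For any homeomorphism g, let H z be the set of points whose f-orbit e-traces the
  g-orbit of z. Its graph is closed, so H is compact valued and upper semi-continuous with a
  closed domain, and H conjugates g to f. Two points of H z are 2e-close along their whole
  f-orbits, so for z near x and small e, H z lies in a set Gamma of measure zero by uniform
  expansiveness. If x is moreover shadowable and g is C0-close to f, the g-orbits of almost
  every z near x are pseudo orbits of f and hence are traced, i.e. z lies in the domain of H.\<close>

lemma is_homeoD:
  assumes "is_homeo f"
  shows "bij f" "continuous_on UNIV f" "continuous_on UNIV (inv f)"
proof -
  obtain g where h: "homeomorphism UNIV UNIV f g"
    using assms is_homeo_def by blast
  have gf: "\<And>x. g (f x) = x" and fg: "\<And>y. f (g y) = y"
    using h by (auto simp: homeomorphism_def)
  show "bij f" by (metis bijI' gf fg)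
  have "inv f = g" using gf fg by (metis inv_equality ext)
  then show "continuous_on UNIV f" "continuous_on UNIV (inv f)"
    using h by (auto simp: homeomorphism_def)
qed

lemma continuous_on_funpow:
  fixes h :: "'a::topological_space \<Rightarrow> 'a"
  assumes "continuous_on UNIV h"
  shows "continuous_on UNIV (h ^^ k)"
proof (induction k)
  case (Suc k)
  then show ?case
    using continuous_on_compose2[OF assms] by (simp add: funpow_Suc_right)
qed simp

lemma continuous_on_iter: "is_homeo f \<Longrightarrow> continuous_on UNIV (iter f n)"
  unfolding iter_def by (simp add: continuous_on_funpow is_homeoD)

lemma iter_0 [simp]: "iter f 0 y = y"
  by (simp add: iter_def)

lemma iter_add_one:
  assumes "bij f"
  shows "iter f (n + 1) y = f (iter f n y)"
proof (cases "0 \<le> n")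
  case True
  then show ?thesis by (simp add: iter_def nat_add_distrib)
next
  case False
  then obtain k where n: "n = - int (Suc k)"
    by (metis int_cases le_refl minus_minus neg_0_le_iff_le of_nat_0_le_iff)
  have "f (inv f z) = z" for z
    using assms by (simp add: bij_is_surj surj_f_inv_f)
  then show ?thesis
    using n by (simp add: iter_def nat_add_distrib)
qed

lemma iter_commute:
  assumes "bij f"
  shows "iter f n (f y) = f (iter f n y)"
proof -
  have "(inv f ^^ k) (f y) = f ((inv f ^^ k) y)" for k
  proof (induction k)
    case (Suc k)
    have "inv f (f z) = f (inv f z)" for z
      using assms by (simp add: bij_is_inj bij_is_surj surj_f_inv_f)
    then show ?case using Suc by simp
  qed simp
  then show ?thesis
    by (simp add: iter_def funpow_swap1)
qed

lemma iter_shift: "bij f \<Longrightarrow> iter f n (f y) = iter f (n + 1) y"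
  by (simp add: iter_add_one iter_commute)

lemma closed_Collect_iter_dist_le:
  fixes f g :: "'a::metric_space \<Rightarrow> 'a" and a b :: "'b::topological_space \<Rightarrow> 'a"
  assumes "is_homeo f" "is_homeo g" "continuous_on UNIV a" "continuous_on UNIV b"
  shows "closed {p. \<forall>n. dist (iter f n (a p)) (iter g n (b p)) \<le> e}"
proof (rule closed_Collect_all)
  fix n
  have "continuous_on UNIV (\<lambda>p. iter f n (a p))" "continuous_on UNIV (\<lambda>p. iter g n (b p))"
    using continuous_on_compose2[OF continuous_on_iter] assms by blast+
  then show "closed {p. dist (iter f n (a p)) (iter g n (b p)) \<le> e}"
    by (intro closed_Collect_le continuous_intros)
qed

lemma closed_fst_image:
  fixes K :: "('a::topological_space \<times> 'b::topological_space) set"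
  assumes "compact (UNIV :: 'b set)" "closed K"
  shows "closed (fst ` K)"
  using closed_map_fst[of "euclidean :: 'b topology" "euclidean :: 'a topology"] assms
  by (simp add: closed_map_def compact_space_def)

lemma usc_on_closed_graph:
  fixes H :: "'a::metric_space \<Rightarrow> 'b::metric_space set"
  assumes "compact (UNIV :: 'b set)" "closed {(z, y). y \<in> H z}"
  shows "usc_on Z H"
  unfolding usc_on_def
proof (intro ballI allI impI)
  fix z V assume "z \<in> dom_sv Z H" and V: "open V \<and> H z \<subseteq> V"
  define K where "K = {(z, y). y \<in> H z} \<inter> (UNIV \<times> - V)"
  have "closed (fst ` K)"
    unfolding K_def using assms V by (intro closed_fst_image closed_Int closed_Times) auto
  moreover have "z \<notin> fst ` K"
    using V unfolding K_def by auto
  ultimately obtain \<gamma> where "\<gamma> > 0" and \<gamma>: "ball z \<gamma> \<subseteq> - fst ` K"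
    by (meson ComplI open_Compl open_contains_ball)
  have "H w \<subseteq> V" if "dist w z < \<gamma>" for w
  proof
    fix y assume "y \<in> H w"
    moreover have "w \<in> ball z \<gamma>"
      using that by (simp add: dist_commute)
    then have "w \<notin> fst ` K"
      using \<gamma> by blast
    ultimately show "y \<in> V"
      unfolding K_def by force
  qed
  then show "\<exists>\<gamma>>0. \<forall>w\<in>Z. dist w z < \<gamma> \<longrightarrow> H w \<subseteq> V"
    using \<open>\<gamma> > 0\<close> by blast
qed

lemma closed_dom_sv_closed_graph:
  fixes H :: "'a::metric_space \<Rightarrow> 'b::metric_space set"
  assumes "compact (UNIV :: 'b set)" "closed {(z, y). y \<in> H z}" "closed Z"
  shows "closed (dom_sv Z H)"
proof -
  have "dom_sv Z H = Z \<inter> fst ` {(z, y). y \<in> H z}"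
    unfolding dom_sv_def by force
  then show ?thesis
    using assms closed_fst_image by (metis closed_Int)
qed

definition tracing_set :: "('a::metric_space \<Rightarrow> 'a) \<Rightarrow> ('a \<Rightarrow> 'a) \<Rightarrow> real \<Rightarrow> 'a \<Rightarrow> 'a set" where
  "tracing_set f g e z = {y. \<forall>n. dist (iter f n y) (iter g n z) \<le> e}"

lemma closed_graph_tracing_set:
  assumes "is_homeo f" "is_homeo g"
  shows "closed {(z, y). y \<in> tracing_set f g e z}"
  using closed_Collect_iter_dist_le[OF assms continuous_on_snd[OF continuous_on_id]
      continuous_on_fst[OF continuous_on_id]]
  by (simp add: tracing_set_def case_prod_unfold)

lemma closed_tracing_set:
  assumes "is_homeo f" "is_homeo g"
  shows "closed (tracing_set f g e z)"
  using closed_Collect_iter_dist_le[OF assms continuous_on_id continuous_on_const]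
  by (simp add: tracing_set_def)

lemma tracing_set_subset_cball: "tracing_set f g e z \<subseteq> cball z e"
proof
  fix y assume "y \<in> tracing_set f g e z"
  then have "dist (iter f 0 y) (iter g 0 z) \<le> e"
    unfolding tracing_set_def by blast
  then show "y \<in> cball z e"
    by (simp add: dist_commute)
qed

lemma image_tracing_set:
  assumes "bij f" "bij g"
  shows "f ` tracing_set f g e z = tracing_set f g e (g z)"
proof
  show "f ` tracing_set f g e z \<subseteq> tracing_set f g e (g z)"
    using assms by (auto simp: tracing_set_def iter_shift)
next
  show "tracing_set f g e (g z) \<subseteq> f ` tracing_set f g e z"
  proof
    fix y assume y: "y \<in> tracing_set f g e (g z)"
    have f_inv: "f (inv f y) = y"
      using assms by (simp add: bij_is_surj surj_f_inv_f)
    have "iter f n (inv f y) = iter f (n - 1) y" "iter g n z = iter g (n - 1) (g z)" for n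
      using iter_shift[OF assms(1), of "n - 1" "inv f y"] iter_shift[OF assms(2), of "n - 1" z] f_inv
      by simp_all
    then have "inv f y \<in> tracing_set f g e z"
      using y by (simp add: tracing_set_def)
    then show "y \<in> f ` tracing_set f g e z"
      using f_inv by (metis image_eqI)
  qed
qed

lemma tracing_set_subset_Gamma:
  assumes "y\<^sub>0 \<in> tracing_set f g e z" "2 * e \<le> c" "dist x z + e < c"
  shows "tracing_set f g e z \<subseteq> Gamma f c x y\<^sub>0"
  unfolding Gamma_def
proof (intro subsetI CollectI conjI allI)
  fix y assume y: "y \<in> tracing_set f g e z"
  have "dist x y \<le> dist x z + dist z y"
    by (rule dist_triangle)
  then show "y \<in> ball x c"
    using tracing_set_subset_cball[of f g e z] y assms(3) by auto
  fix n
  have "dist (iter f n y) (iter g n z) \<le> e" "dist (iter f n y\<^sub>0) (iter g n z) \<le> e"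
    using y assms(1) unfolding tracing_set_def by auto
  then show "dist (iter f n y) (iter f n y\<^sub>0) \<le> c"
    using dist_triangle2[of "iter f n y" "iter f n y\<^sub>0" "iter g n z"] assms(2) by linarith
qed

lemma Gamma_in_borel:
  assumes "is_homeo f"
  shows "Gamma f c x z \<in> sets borel"
proof -
  have "Gamma f c x z = ball x c \<inter> tracing_set f f c z"
    unfolding Gamma_def tracing_set_def by auto
  then show ?thesis
    using closed_tracing_set[OF assms assms] by simp
qed

lemma emeasure_tracing_set_eq_0:
  assumes "is_homeo f" "sets \<mu> = sets borel"
    and Gamma_null: "\<forall>y\<in>ball x c. emeasure \<mu> (Gamma f c x y) = 0"
    and "2 * e \<le> c" "dist x z + e < c"
  shows "emeasure \<mu> (tracing_set f g e z) = 0"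
proof (cases "tracing_set f g e z = {}")
  case False
  then obtain y\<^sub>0 where y\<^sub>0: "y\<^sub>0 \<in> tracing_set f g e z"
    by blast
  then have "y\<^sub>0 \<in> ball x c"
    using tracing_set_subset_Gamma[OF y\<^sub>0 assms(4,5)] by (auto simp: Gamma_def)
  moreover have "emeasure \<mu> (tracing_set f g e z) \<le> emeasure \<mu> (Gamma f c x y\<^sub>0)"
    using tracing_set_subset_Gamma[OF y\<^sub>0 assms(4,5)] Gamma_in_borel[OF assms(1)] assms(2)
    by (intro emeasure_mono) auto
  ultimately show ?thesis
    using Gamma_null by simp
qed simp

lemma stab_map_tracing_set:
  fixes f g :: "'a::metric_space \<Rightarrow> 'a"
  assumes "compact (UNIV :: 'a set)" "is_homeo f" "is_homeo g" "sets \<mu> = sets borel"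
    and "\<forall>y\<in>ball x c. emeasure \<mu> (Gamma f c x y) = 0"
    and "e \<le> \<epsilon>" "2 * e \<le> c" "\<delta> / 4 + e < c"
  shows "stab_map \<mu> f g x \<epsilon> \<delta> (tracing_set f g e)"
proof -
  define Z where "Z = closure (orbit g x)"
  have graph: "closed {(z, y). y \<in> tracing_set f g e z}"
    using closed_graph_tracing_set[OF assms(2,3)] .
  have "compact (tracing_set f g e z)" for z
    using compact_Int_closed[OF assms(1) closed_tracing_set[OF assms(2,3)]] by simp
  moreover have "dom_sv Z (tracing_set f g e) \<in> sets \<mu>"
    using closed_dom_sv_closed_graph[OF assms(1) graph] assms(4) by (simp add: Z_def)
  moreover have "emeasure \<mu> (tracing_set f g e z) = 0" if "z \<in> ball x (\<delta> / 4)" for z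
    using that assms(8) by (intro emeasure_tracing_set_eq_0[OF assms(2,4,5,7)]) simp
  moreover have "tracing_set f g e z \<subseteq> cball z \<epsilon>" for z
    using tracing_set_subset_cball[of f g e z] assms(6) by auto
  moreover have "f ` tracing_set f g e z = tracing_set f g e (g z)" for z
    using image_tracing_set is_homeoD(1) assms(2,3) by blast
  ultimately show ?thesis
    unfolding stab_map_def Let_def Z_def[symmetric]
    using usc_on_closed_graph[OF assms(1) graph] by blast
qed

lemma pseudo_orbit_iter_C0_close:
  assumes "bij g" "C0_close f g \<delta>" "\<delta> < \<delta>'"
  shows "pseudo_orbit f \<delta>' (\<lambda>n. iter g n z)"
  using assms by (auto simp: pseudo_orbit_def C0_close_def iter_add_one intro: le_less_trans)

lemma unif_expansive_imp_top_stable_point: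
  fixes f :: "'a::metric_space \<Rightarrow> 'a"
  assumes "compact (UNIV :: 'a set)" "is_homeo f" "sets \<mu> = sets borel"
    and "unif_expansive_point \<mu> f x"
  shows "top_stable_point \<mu> f x"
  unfolding top_stable_point_def
proof (intro allI impI)
  fix \<epsilon> :: real assume "\<epsilon> > 0"
  obtain c where "c > 0" and Gamma_null: "\<forall>y\<in>ball x c. emeasure \<mu> (Gamma f c x y) = 0"
    using assms(4) unfolding unif_expansive_point_def by blast
  have "stab_map \<mu> f g x \<epsilon> (c / 3) (tracing_set f g (min \<epsilon> (c / 3)))" if "is_homeo g" for g
    using \<open>c > 0\<close> by (intro stab_map_tracing_set[OF assms(1,2) that assms(3) Gamma_null]) auto
  then show "\<exists>\<delta>>0. \<forall>g. is_homeo g \<and> C0_close f g \<delta> \<longrightarrow> (\<exists>H. stab_map \<mu> f g x \<epsilon> \<delta> H)"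
    using \<open>c > 0\<close> by (intro exI[of _ "c / 3"]) auto
qed

lemma unif_expansive_shadowable_imp_strong_top_stable_point:
  fixes f :: "'a::metric_space \<Rightarrow> 'a"
  assumes "compact (UNIV :: 'a set)" "is_homeo f" "sets \<mu> = sets borel"
    and "unif_expansive_point \<mu> f x" "shadowable_point \<mu> f x"
  shows "strong_top_stable_point \<mu> f x"
  unfolding strong_top_stable_point_def
proof (intro allI impI)
  fix \<epsilon> :: real assume "\<epsilon> > 0"
  obtain c where "c > 0" and Gamma_null: "\<forall>y\<in>ball x c. emeasure \<mu> (Gamma f c x y) = 0"
    using assms(4) unfolding unif_expansive_point_def by blast
  define e where "e = min \<epsilon> (c / 3)"
  have "e > 0"
    using \<open>\<epsilon> > 0\<close> \<open>c > 0\<close> by (simp add: e_def)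
  then obtain \<delta>\<^sub>s B where "\<delta>\<^sub>s > 0" and B: "B \<in> sets \<mu>" "emeasure \<mu> (UNIV - B) = 0"
    and shadow: "\<And>\<xi>. pseudo_orbit f \<delta>\<^sub>s \<xi> \<and> \<xi> 0 \<in> B \<inter> ball x \<delta>\<^sub>s \<Longrightarrow> traced f e \<xi>"
    using assms(5) unfolding shadowable_point_def by meson
  define \<delta> where "\<delta> = min (\<delta>\<^sub>s / 2) (c / 3)"
  have \<delta>: "0 < \<delta>" "\<delta> < \<delta>\<^sub>s" "\<delta> / 4 + e < c"
    using \<open>\<delta>\<^sub>s > 0\<close> \<open>c > 0\<close> by (auto simp: \<delta>_def e_def)
  have "\<exists>H. stab_map \<mu> f g x \<epsilon> \<delta> H \<and>
           emeasure \<mu> (UNIV - dom_sv (closure (orbit g x)) H)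
             \<le> emeasure \<mu> (UNIV - (B \<inter> ball x \<delta> \<inter> closure (orbit g x)))"
    if g: "is_homeo g" "C0_close f g \<delta>" for g
  proof (intro exI conjI)
    define Z where "Z = closure (orbit g x)"
    show "stab_map \<mu> f g x \<epsilon> \<delta> (tracing_set f g e)"
      using \<delta> \<open>c > 0\<close> by (intro stab_map_tracing_set[OF assms(1,2) g(1) assms(3) Gamma_null])
        (auto simp: e_def)
    have "B \<inter> ball x \<delta> \<inter> Z \<subseteq> dom_sv Z (tracing_set f g e)"
    proof
      fix z assume z: "z \<in> B \<inter> ball x \<delta> \<inter> Z"
      have "pseudo_orbit f \<delta>\<^sub>s (\<lambda>n. iter g n z)"
        using pseudo_orbit_iter_C0_close is_homeoD(1)[OF g(1)] g(2) \<delta>(2) by blast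
      with z \<delta>(2) have "traced f e (\<lambda>n. iter g n z)"
        by (intro shadow) auto
      then have "tracing_set f g e z \<noteq> {}"
        unfolding traced_def tracing_set_def by (auto intro: less_imp_le)
      with z show "z \<in> dom_sv Z (tracing_set f g e)"
        unfolding dom_sv_def by blast
    qed
    moreover have "B \<inter> ball x \<delta> \<inter> Z \<in> sets \<mu>"
      using B assms(3) by (simp add: Z_def)
    then have "UNIV - (B \<inter> ball x \<delta> \<inter> Z) \<in> sets \<mu>"
      by (metis assms(3) sets.compl_sets sets_eq_imp_space_eq space_borel)
    ultimately show "emeasure \<mu> (UNIV - dom_sv Z (tracing_set f g e))
        \<le> emeasure \<mu> (UNIV - (B \<inter> ball x \<delta> \<inter> Z))"
      by (intro emeasure_mono) auto
  qed
  then show "\<exists>\<delta>>0. \<exists>B\<in>sets \<mu>. emeasure \<mu> (UNIV - B) = 0 \<and>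
       (\<forall>g. is_homeo g \<and> C0_close f g \<delta> \<longrightarrow>
        (\<exists>H. stab_map \<mu> f g x \<epsilon> \<delta> H \<and>
           emeasure \<mu> (UNIV - dom_sv (closure (orbit g x)) H)
             \<le> emeasure \<mu> (UNIV - (B \<inter> ball x \<delta> \<inter> closure (orbit g x)))))"
    using \<delta>(1) B by blast
qed

theorem theorem3p9:
  fixes f :: "'a::metric_space \<Rightarrow> 'a" and \<mu> :: "'a measure" and x :: 'a
  assumes "compact (UNIV :: 'a set)"
    and "is_homeo f"
    and "sets \<mu> = sets borel"
    and "emeasure \<mu> UNIV > 0"
    and "unif_expansive_point \<mu> f x"
  shows "top_stable_point \<mu> f x \<and>
         (shadowable_point \<mu> f x \<longrightarrow> strong_top_stable_point \<mu> f x)"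
  using assms unif_expansive_imp_top_stable_point
    unif_expansive_shadowable_imp_strong_top_stable_point by blast

end
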